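(* Let $p\ge1$ and $n\ge p$ be integers, and let $\Lambda\in\mathbb R$. The real vector space of even functions $z\in C^{2n}[-1,1]$ satisfying - $L^{2n}(\Lambda)z=0$ on $[-1,1]$, and - $z^{(j)}(\pm1)=0$ for $j=0,\dots,n-1$, has dimension at most $1$. Equivalently, two linearly independent even eigenfunctions of order $n$ have different eigenvalues.
   Context: Fix an integer $p\ge1$. For an integer $k\ge p$ and real $\Lambda$, the differential operator on $[-1,1]$ is $$L^{2k}(\Lambda)=(-1)^k\frac{d^{2k}}{dx^{2k}}-\Lambda(-1)^{k-p}\frac{d^{2k-2p}}{dx^{2k-2p}}.$$ An eigenfunction of order $k$ with eigenvalue $\Lambda$ is a nonzero real $z\in C^{2k}[-1,1]$ such that: - $L^{2k}(\Lambda)z=0$ on $[-1,1]$, and - $z^{(j)}(\pm1)=0$ for $j<k$. *)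

theory Defs
  imports "HOL-Analysis.Analysis"
begin

text \<open>z is of class C^k on S, with D j its j-th derivative (D 0 = z on S).
  Derivatives are taken within S, so at the endpoints of [-1,1] they are one-sided.\<close>
definition Ck_derivs :: "nat \<Rightarrow> real set \<Rightarrow> (real \<Rightarrow> real) \<Rightarrow> (nat \<Rightarrow> real \<Rightarrow> real) \<Rightarrow> bool" where
  "Ck_derivs k S z D \<longleftrightarrow>
     (\<forall>x\<in>S. D 0 x = z x) \<and>
     (\<forall>j<k. \<forall>x\<in>S. (D j has_real_derivative D (Suc j) x) (at x within S)) \<and>
     (\<forall>j\<le>k. continuous_on S (D j))"

definition L_op :: "nat \<Rightarrow> nat \<Rightarrow> real \<Rightarrow> (nat \<Rightarrow> real \<Rightarrow> real) \<Rightarrow> real \<Rightarrow> real" where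
  "L_op p k \<Lambda> D x = (-1) ^ k * D (2*k) x - \<Lambda> * (-1) ^ (k - p) * D (2*k - 2*p) x"

definition even_sol :: "nat \<Rightarrow> nat \<Rightarrow> real \<Rightarrow> (real \<Rightarrow> real) \<Rightarrow> bool" where
  "even_sol p n \<Lambda> z \<longleftrightarrow>
     (\<exists>D. Ck_derivs (2*n) {-1..1} z D \<and>
          (\<forall>x\<in>{-1..1}. L_op p n \<Lambda> D x = 0) \<and>
          (\<forall>j<n. D j 1 = 0 \<and> D j (-1) = 0)) \<and>
     (\<forall>x\<in>{-1..1}. z (-x) = z x)"

end

theory Submission
  imports Defs
begin

text \<open>Testing L^(2n)(Lambda) z = 0 against z and integrating by parts n times gives the energy
  identity  int (z^(n))^2 = Lambda int (z^(n-p))^2.  Testing it instead against the Pohozaev multiplier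
  (x + 1) z' gives  (n - 1/2) int (z^(n))^2 = Lambda (n - p - 1/2) int (z^(n-p))^2,  provided also
  z^(n)(1) = 0.  Subtracting, p int (z^(n))^2 = 0, so z^(n) = 0 and the boundary conditions at 1
  force z = 0.  A suitable nontrivial combination of two solutions satisfies z^(n)(1) = 0, so any two
  solutions are linearly dependent.\<close>

lemma Ck_derivs_lincomb:
  assumes "Ck_derivs k S z1 D1" and "Ck_derivs k S z2 D2"
  shows "Ck_derivs k S (\<lambda>x. c1 * z1 x + c2 * z2 x) (\<lambda>j x. c1 * D1 j x + c2 * D2 j x)"
  using assms unfolding Ck_derivs_def
  by (auto intro!: derivative_eq_intros continuous_on_add continuous_on_mult_left)

lemma L_op_lincomb:
  "L_op p k \<Lambda> (\<lambda>j x. c1 * D1 j x + c2 * D2 j x) x = c1 * L_op p k \<Lambda> D1 x + c2 * L_op p k \<Lambda> D2 x"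
  by (simp add: L_op_def algebra_simps)

lemma integral_by_parts_within:
  fixes f g f' g' :: "real \<Rightarrow> real"
  assumes "a \<le> b"
    and f: "\<And>x. x \<in> {a..b} \<Longrightarrow> (f has_real_derivative f' x) (at x within {a..b})"
    and g: "\<And>x. x \<in> {a..b} \<Longrightarrow> (g has_real_derivative g' x) (at x within {a..b})"
    and "continuous_on {a..b} f'" "continuous_on {a..b} g'"
  shows "integral {a..b} (\<lambda>x. f' x * g x) = f b * g b - f a * g a - integral {a..b} (\<lambda>x. f x * g' x)"
proof -
  have "continuous_on {a..b} f" "continuous_on {a..b} g"
    using f g by (metis DERIV_continuous_on)+
  then have int: "(\<lambda>x. f' x * g x) integrable_on {a..b}" "(\<lambda>x. f x * g' x) integrable_on {a..b}"
    using assms by (auto intro!: integrable_continuous_interval continuous_on_mult)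
  have "((\<lambda>x. f' x * g x + f x * g' x) has_integral f b * g b - f a * g a) {a..b}"
    using f g by (intro fundamental_theorem_of_calculus[OF \<open>a \<le> b\<close>])
      (auto simp flip: has_real_derivative_iff_has_vector_derivative intro!: derivative_eq_intros)
  then show ?thesis
    using integral_add[OF int] by (simp add: integral_unique)
qed

lemma integral_by_parts_iterated:
  fixes F G :: "nat \<Rightarrow> real \<Rightarrow> real"
  assumes "a \<le> b"
    and F: "\<And>i x. i < m \<Longrightarrow> x \<in> {a..b} \<Longrightarrow> (F i has_real_derivative F (Suc i) x) (at x within {a..b})"
    and G: "\<And>i x. i < m \<Longrightarrow> x \<in> {a..b} \<Longrightarrow> (G i has_real_derivative G (Suc i) x) (at x within {a..b})"
    and "\<And>i. i \<le> m \<Longrightarrow> continuous_on {a..b} (F i)" "\<And>i. i \<le> m \<Longrightarrow> continuous_on {a..b} (G i)"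
    and "\<And>i. i < m \<Longrightarrow> F (m - 1 - i) a * G i a = 0 \<and> F (m - 1 - i) b * G i b = 0"
  shows "integral {a..b} (\<lambda>x. F m x * G 0 x) = (-1) ^ m * integral {a..b} (\<lambda>x. F 0 x * G m x)"
  using assms
proof (induction m arbitrary: G)
  case 0
  then show ?case by simp
next
  case (Suc m)
  have "integral {a..b} (\<lambda>x. F (Suc m) x * G 0 x)
      = F m b * G 0 b - F m a * G 0 a - integral {a..b} (\<lambda>x. F m x * G 1 x)"
    by (rule integral_by_parts_within) (use Suc.prems in auto)
  also have "\<dots> = - integral {a..b} (\<lambda>x. F m x * G 1 x)"
    using Suc.prems(6)[of 0] by auto
  also have "integral {a..b} (\<lambda>x. F m x * G 1 x) = (-1) ^ m * integral {a..b} (\<lambda>x. F 0 x * G (Suc m) x)"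
    using Suc.IH[of "\<lambda>i. G (Suc i)"] Suc.prems by (auto simp: Suc_diff_Suc)
  finally show ?case by simp
qed

lemma integral_moment_mult_derivative:
  fixes f f' :: "real \<Rightarrow> real"
  assumes "a \<le> b"
    and f: "\<And>x. x \<in> {a..b} \<Longrightarrow> (f has_real_derivative f' x) (at x within {a..b})"
    and "continuous_on {a..b} f'" and "f b = 0"
  shows "integral {a..b} (\<lambda>x. (x - a) * (f x * f' x)) = - integral {a..b} (\<lambda>x. (f x)\<^sup>2) / 2"
proof -
  have "continuous_on {a..b} f"
    using f by (metis DERIV_continuous_on)
  have "integral {a..b} (\<lambda>x. 1 * (f x)\<^sup>2)
      = (b - a) * (f b)\<^sup>2 - (a - a) * (f a)\<^sup>2 - integral {a..b} (\<lambda>x. (x - a) * (2 * f x * f' x))"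
    by (rule integral_by_parts_within[OF \<open>a \<le> b\<close>])
      (use f \<open>continuous_on {a..b} f\<close> assms(3) in
        \<open>auto intro!: derivative_eq_intros continuous_on_mult continuous_on_const\<close>)
  moreover have "integral {a..b} (\<lambda>x. (x - a) * (2 * f x * f' x)) = 2 * integral {a..b} (\<lambda>x. (x - a) * (f x * f' x))"
    by (simp add: mult.left_commute mult.assoc flip: integral_mult_right)
  ultimately show ?thesis
    using \<open>f b = 0\<close> by simp
qed

lemma Ck_derivs_eq_0_if_derivative_eq_0:
  assumes "a \<le> b" and "Ck_derivs m {a..b} z D" and "k \<le> m"
    and "\<And>x. x \<in> {a..b} \<Longrightarrow> D k x = 0" and "\<And>j. j < k \<Longrightarrow> D j b = 0"
    and "x \<in> {a..b}"
  shows "z x = 0"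
  using assms(3-6)
proof (induction k arbitrary: x)
  case 0
  then show ?case
    using assms(2) by (simp add: Ck_derivs_def)
next
  case (Suc k)
  have "\<exists>c. \<forall>y\<in>{a..b}. D k y = c"
  proof (rule has_field_derivative_zero_constant)
    fix y assume "y \<in> {a..b}"
    moreover have "k < m"
      using Suc.prems(1) by simp
    ultimately show "(D k has_field_derivative 0) (at y within {a..b})"
      using assms(2) Suc.prems(2)[of y] by (metis Ck_derivs_def)
  qed simp
  then have "D k y = D k b" if "y \<in> {a..b}" for y
    using that \<open>a \<le> b\<close> by fastforce
  then show ?case
    using Suc by simp
qed

lemma Ck_derivs_energy_identity:
  assumes "a \<le> b" and "Ck_derivs m {a..b} z D" and "2 * k \<le> m"
    and "\<And>j. j < k \<Longrightarrow> D j a = 0 \<and> D j b = 0"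
  shows "integral {a..b} (\<lambda>x. D (2 * k) x * D 0 x) = (-1) ^ k * integral {a..b} (\<lambda>x. (D k x)\<^sup>2)"
proof -
  have "integral {a..b} (\<lambda>x. D (k + k) x * D 0 x) = (-1) ^ k * integral {a..b} (\<lambda>x. D (k + 0) x * D k x)"
    by (rule integral_by_parts_iterated[where F = "\<lambda>i. D (k + i)"]) (use assms in \<open>auto simp: Ck_derivs_def\<close>)
  then show ?thesis
    by (simp add: mult_2 power2_eq_square)
qed

lemma Ck_derivs_pohozaev_identity:
  assumes "a \<le> b" and D: "Ck_derivs m {a..b} z D" and "2 * k \<le> m" and "0 < m"
    and bc: "\<And>j. j < k \<Longrightarrow> D j a = 0 \<and> D j b = 0" and "D k b = 0"
  shows "integral {a..b} (\<lambda>x. D (2 * k) x * ((x - a) * D 1 x))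
       = (-1) ^ k * (real k - 1/2) * integral {a..b} (\<lambda>x. (D k x)\<^sup>2)"
proof -
  \<comment> \<open>\<open>G i\<close> is the \<open>i\<close>-th derivative of the multiplier \<open>(x - a) z'\<close>.\<close>
  define G where "G i x = (x - a) * D (Suc i) x + real i * D i x" for i x
  have der: "\<And>j x. j < m \<Longrightarrow> x \<in> {a..b} \<Longrightarrow> (D j has_real_derivative D (Suc j) x) (at x within {a..b})"
    and cont: "\<And>j. j \<le> m \<Longrightarrow> continuous_on {a..b} (D j)"
    using D by (auto simp: Ck_derivs_def)
  have "Suc k \<le> m"
    using assms(3,4) by linarith
  have by_parts: "integral {a..b} (\<lambda>x. D (k + k) x * G 0 x) = (-1) ^ k * integral {a..b} (\<lambda>x. D (k + 0) x * G k x)"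
  proof (rule integral_by_parts_iterated[OF \<open>a \<le> b\<close>])
    fix i x assume "i < k" "x \<in> {a..b}"
    then have "(D (Suc i) has_real_derivative D (Suc (Suc i)) x) (at x within {a..b})"
      "(D i has_real_derivative D (Suc i) x) (at x within {a..b})"
      using der \<open>Suc k \<le> m\<close> by auto
    then have "(G i has_real_derivative 1 * D (Suc i) x + (x - a) * D (Suc (Suc i)) x + real i * D (Suc i) x)
        (at x within {a..b})"
      unfolding G_def by (auto intro!: derivative_eq_intros)
    then show "(G i has_real_derivative G (Suc i) x) (at x within {a..b})"
      by (simp add: G_def algebra_simps)
  next
    fix i assume "i < k"
    moreover have "D (Suc i) b = 0"
      using bc \<open>D k b = 0\<close> \<open>i < k\<close> by (cases "Suc i = k") auto
    ultimately show "D (k + (k - 1 - i)) a * G i a = 0 \<and> D (k + (k - 1 - i)) b * G i b = 0"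
      using bc by (simp add: G_def)
  qed (use der cont assms(3) \<open>Suc k \<le> m\<close> in
      \<open>auto simp: G_def
        intro!: continuous_on_add continuous_on_mult continuous_on_diff continuous_on_id continuous_on_const\<close>)
  have split: "integral {a..b} (\<lambda>x. D k x * G k x)
      = integral {a..b} (\<lambda>x. (x - a) * (D k x * D (Suc k) x)) + real k * integral {a..b} (\<lambda>x. (D k x)\<^sup>2)"
  proof -
    have "continuous_on {a..b} (D k)" "continuous_on {a..b} (D (Suc k))"
      using cont \<open>Suc k \<le> m\<close> by auto
    then have "integral {a..b} (\<lambda>x. (x - a) * (D k x * D (Suc k) x) + real k * (D k x)\<^sup>2)
        = integral {a..b} (\<lambda>x. (x - a) * (D k x * D (Suc k) x)) + integral {a..b} (\<lambda>x. real k * (D k x)\<^sup>2)"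
      by (intro integral_add integrable_continuous_interval continuous_intros)
    then show ?thesis
      by (simp add: G_def algebra_simps power2_eq_square)
  qed
  have moment: "integral {a..b} (\<lambda>x. (x - a) * (D k x * D (Suc k) x)) = - integral {a..b} (\<lambda>x. (D k x)\<^sup>2) / 2"
    by (rule integral_moment_mult_derivative) (use assms der cont \<open>Suc k \<le> m\<close> in auto)
  have "integral {a..b} (\<lambda>x. D (2 * k) x * ((x - a) * D 1 x)) = (-1) ^ k * integral {a..b} (\<lambda>x. D k x * G k x)"
    using by_parts by (simp add: G_def mult_2)
  also have "\<dots> = (-1) ^ k * (- integral {a..b} (\<lambda>x. (D k x)\<^sup>2) / 2 + real k * integral {a..b} (\<lambda>x. (D k x)\<^sup>2))"
    unfolding split moment ..
  finally show ?thesis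
    by (simp add: algebra_simps)
qed

lemma integral_L_op_mult:
  assumes "continuous_on {a..b} (D (2 * k))" "continuous_on {a..b} (D (2 * k - 2 * p))"
    and "continuous_on {a..b} h"
  shows "integral {a..b} (\<lambda>x. L_op p k \<Lambda> D x * h x)
       = (-1) ^ k * integral {a..b} (\<lambda>x. D (2 * k) x * h x)
         - \<Lambda> * (-1) ^ (k - p) * integral {a..b} (\<lambda>x. D (2 * k - 2 * p) x * h x)"
proof -
  have "integral {a..b} (\<lambda>x. L_op p k \<Lambda> D x * h x)
      = integral {a..b} (\<lambda>x. (-1) ^ k * (D (2 * k) x * h x) - \<Lambda> * (-1) ^ (k - p) * (D (2 * k - 2 * p) x * h x))"
    by (simp add: L_op_def algebra_simps)
  also have "\<dots> = integral {a..b} (\<lambda>x. (-1) ^ k * (D (2 * k) x * h x))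
      - integral {a..b} (\<lambda>x. \<Lambda> * (-1) ^ (k - p) * (D (2 * k - 2 * p) x * h x))"
    using assms by (intro integral_diff integrable_continuous_interval continuous_intros)
  finally show ?thesis
    by simp
qed

lemma L_op_solution_eq_0:
  assumes "1 \<le> p" and "p \<le> n" and "a < b" and D: "Ck_derivs (2 * n) {a..b} z D"
    and L: "\<And>x. x \<in> {a..b} \<Longrightarrow> L_op p n \<Lambda> D x = 0"
    and bc: "\<And>j. j < n \<Longrightarrow> D j a = 0 \<and> D j b = 0" and "D n b = 0"
    and "x \<in> {a..b}"
  shows "z x = 0"
proof -
  have cont: "\<And>j. j \<le> 2 * n \<Longrightarrow> continuous_on {a..b} (D j)"
    using D by (simp add: Ck_derivs_def)
  have weak_form: "(-1) ^ n * integral {a..b} (\<lambda>x. D (2 * n) x * h x)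
      = \<Lambda> * (-1) ^ (n - p) * integral {a..b} (\<lambda>x. D (2 * (n - p)) x * h x)"
    if "continuous_on {a..b} h" for h
  proof -
    have "integral {a..b} (\<lambda>x. L_op p n \<Lambda> D x * h x) = integral {a..b} (\<lambda>x. 0)"
      using L by (intro integral_cong) simp
    then show ?thesis
      using integral_L_op_mult[of a b D n p h \<Lambda>] cont that by (simp add: diff_mult_distrib2)
  qed
  define A where "A = integral {a..b} (\<lambda>x. (D n x)\<^sup>2)"
  define B where "B = integral {a..b} (\<lambda>x. (D (n - p) x)\<^sup>2)"
  have sign_sq: "(-1::real) ^ k * (-1) ^ k = 1" for k :: nat
    by (simp flip: power_add)
  have "n \<noteq> 0"
    using assms(1,2) by linarith
  have "(-1) ^ n * ((-1) ^ n * A) = \<Lambda> * (-1) ^ (n - p) * ((-1) ^ (n - p) * B)"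
    using weak_form[of "D 0"] cont
      Ck_derivs_energy_identity[OF _ D, of n] Ck_derivs_energy_identity[OF _ D, of "n - p"]
      \<open>a < b\<close> bc
    unfolding A_def B_def by simp
  then have energy: "A = \<Lambda> * B"
    by (simp add: mult.assoc[symmetric] sign_sq)
  have "continuous_on {a..b} (\<lambda>x. (x - a) * D 1 x)"
    using cont[of 1] \<open>n \<noteq> 0\<close> by (intro continuous_intros) simp
  then have "(-1) ^ n * ((-1) ^ n * (real n - 1/2) * A) = \<Lambda> * (-1) ^ (n - p) * ((-1) ^ (n - p) * (real (n - p) - 1/2) * B)"
    using weak_form[of "\<lambda>x. (x - a) * D 1 x"] cont \<open>n \<noteq> 0\<close> \<open>D n b = 0\<close> \<open>a < b\<close> bc assms(1)
      Ck_derivs_pohozaev_identity[OF _ D, of n] Ck_derivs_pohozaev_identity[OF _ D, of "n - p"]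
    unfolding A_def B_def by simp
  then have pohozaev: "(real n - 1/2) * A = \<Lambda> * (real (n - p) - 1/2) * B"
    by (simp add: mult.assoc[symmetric] sign_sq)
  have "real p * A = 0"
    using energy pohozaev \<open>p \<le> n\<close> by (simp add: algebra_simps)
  then have "A = 0"
    using \<open>1 \<le> p\<close> by simp
  moreover have "continuous_on {a..b} (\<lambda>x. (D n x)\<^sup>2)"
    using cont[of n] by (intro continuous_intros) simp
  ultimately have "D n y = 0" if "y \<in> {a..b}" for y
    using integral_eq_0_iff[of a b "\<lambda>x. (D n x)\<^sup>2"] \<open>a < b\<close> that
    unfolding A_def by simp
  then show ?thesis
    using Ck_derivs_eq_0_if_derivative_eq_0[OF _ D _ _ _ \<open>x \<in> {a..b}\<close>, of n] \<open>a < b\<close> bc by simp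
qed

theorem mainTheorem7:
  fixes p n :: nat and \<Lambda> :: real and z1 z2 :: "real \<Rightarrow> real"
  assumes "p \<ge> 1" and "n \<ge> p"
    and "even_sol p n \<Lambda> z1" and "even_sol p n \<Lambda> z2"
  shows "\<exists>a b :: real. (a \<noteq> 0 \<or> b \<noteq> 0) \<and> (\<forall>x\<in>{-1..1}. a * z1 x + b * z2 x = 0)"
proof -
  obtain D1 where D1: "Ck_derivs (2 * n) {-1..1} z1 D1" "\<forall>x\<in>{-1..1}. L_op p n \<Lambda> D1 x = 0"
    "\<forall>j<n. D1 j 1 = 0 \<and> D1 j (-1) = 0"
    using assms(3) unfolding even_sol_def by blast
  obtain D2 where D2: "Ck_derivs (2 * n) {-1..1} z2 D2" "\<forall>x\<in>{-1..1}. L_op p n \<Lambda> D2 x = 0"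
    "\<forall>j<n. D2 j 1 = 0 \<and> D2 j (-1) = 0"
    using assms(4) unfolding even_sol_def by blast
  obtain a b :: real where "a \<noteq> 0 \<or> b \<noteq> 0" and "a * D1 n 1 + b * D2 n 1 = 0"
  proof (cases "D1 n 1 = 0")
    case True
    then show ?thesis
      using that[of 1 0] by simp
  next
    case False
    then show ?thesis
      using that[of "D2 n 1" "- D1 n 1"] by (simp add: mult.commute)
  qed
  moreover have "a * z1 x + b * z2 x = 0" if "x \<in> {-1..1}" for x
    by (rule L_op_solution_eq_0[OF assms(1,2) _ Ck_derivs_lincomb[OF D1(1) D2(1)], where \<Lambda> = \<Lambda>])
      (use D1 D2 that \<open>a * D1 n 1 + b * D2 n 1 = 0\<close> in \<open>auto simp: L_op_lincomb\<close>)
  ultimately show ?thesis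
    by blast
qed

end
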